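(* Let $k\ge1$ and $c\in\mathcal{S}_k^\alpha\setminus\{\mathbf{0}\}$. Then $w_{Hom}(c)=q^{s(k+1)-2}(q-1)$.
   Context: Let $R$ be a finite commutative chain ring with maximal ideal $\langle\gamma\rangle$, nilpotency index $s$ and residue field $R/\langle\gamma\rangle\cong\mathbb{F}_q$. Fix coset representatives $T=\{e_0,\dots,e_{q-1}\}$ with $e_0=0,e_1=1$, ordered $e_0<\dots<e_{q-1}$; each $r\in R$ is uniquely $\sum_{i=0}^{s-1}r_i\gamma^i$, $r_i\in T$; order $R$ by $x>y$ iff $x_i>y_i$ in $T$ for the largest $i$ with $x_i\neq y_i$; list $R=\{\rho_0,\dots,\rho_{q^s-1}\}$ increasingly. $\mathbf{a}^{(m)}$ is the constant vector of length $m$. Define $G_1^\alpha=(\rho_0\ \cdots\ \rho_{q^s-1})$ and, for $k>1$, $G_k^\alpha$ as the $k\times q^{sk}$ matrix of $q^s$ column blocks, the $j$-th having first row $\boldsymbol{\rho_j}^{(q^{s(k-1)})}$ and $G_{k-1}^\alpha$ below. $\mathcal{S}_k^\alpha$ is the $R$-submodule of $R^{q^{sk}}$ generated by the rows of $G_k^\alpha$. Homogeneous weight: for $x\in R$, $w_{Hom}(x)=0$ if $x=0$; $w_{Hom}(x)=(q-1)q^{s-2}$ if $x\neq0$ and $x\notin\langle\gamma^{s-1}\rangle$; $w_{Hom}(x)=q^{s-1}$ if $x\neq0$ and $x\in\langle\gamma^{s-1}\rangle$; extended to $R^n$ by summing over coordinates. *)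

theory Defs
  imports Main
begin

definition is_ideal :: "'a::comm_ring_1 set \<Rightarrow> bool" where
  "is_ideal I \<longleftrightarrow> 0 \<in> I \<and> (\<forall>x\<in>I. \<forall>y\<in>I. x + y \<in> I) \<and> (\<forall>r. \<forall>x\<in>I. r * x \<in> I)"

definition pideal :: "'a::comm_ring_1 \<Rightarrow> 'a set" where
  "pideal g = {g * x | x. True}"

definition maximal_ideal :: "'a::comm_ring_1 set \<Rightarrow> bool" where
  "maximal_ideal M \<longleftrightarrow> is_ideal M \<and> M \<noteq> UNIV \<and>
     (\<forall>J. is_ideal J \<and> M \<subseteq> J \<longrightarrow> J = M \<or> J = UNIV)"

definition chain_ring :: "'a::comm_ring_1 itself \<Rightarrow> bool" where
  "chain_ring _ \<longleftrightarrow> (\<forall>I J :: 'a set. is_ideal I \<and> is_ideal J \<longrightarrow> I \<subseteq> J \<or> J \<subseteq> I)"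

text \<open>Standing data: R = 'a a finite commutative chain ring with maximal ideal generated
  by g, nilpotency index s, residue field with q elements, and coset representatives
  e 0, ..., e (q-1) (indexed in the fixed order e_0 < ... < e_(q-1)), e 0 = 0, e 1 = 1.\<close>
definition chain_ring_setup :: "'a::{comm_ring_1,finite} \<Rightarrow> nat \<Rightarrow> nat \<Rightarrow> (nat \<Rightarrow> 'a) \<Rightarrow> bool" where
  "chain_ring_setup g s q e \<longleftrightarrow>
     chain_ring TYPE('a) \<and>
     maximal_ideal (pideal g) \<and>
     s \<ge> 1 \<and> g ^ s = 0 \<and> g ^ (s - 1) \<noteq> 0 \<and>
     (\<forall>x::'a. \<exists>!i. i < q \<and> x - e i \<in> pideal g) \<and>
     e 0 = 0 \<and> e 1 = 1"

definition digits :: "'a::comm_ring_1 \<Rightarrow> nat \<Rightarrow> nat \<Rightarrow> (nat \<Rightarrow> 'a) \<Rightarrow> 'a \<Rightarrow> nat \<Rightarrow> nat" where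
  "digits g s q e r = (THE d. (\<forall>i<s. d i < q) \<and> (\<forall>i\<ge>s. d i = 0) \<and>
                               r = (\<Sum>i<s. e (d i) * g ^ i))"

definition rless :: "'a::comm_ring_1 \<Rightarrow> nat \<Rightarrow> nat \<Rightarrow> (nat \<Rightarrow> 'a) \<Rightarrow> 'a \<Rightarrow> 'a \<Rightarrow> bool" where
  "rless g s q e x y \<longleftrightarrow>
     (\<exists>i<s. digits g s q e x i < digits g s q e y i \<and>
            (\<forall>j. i < j \<and> j < s \<longrightarrow> digits g s q e x j = digits g s q e y j))"

text \<open>rho n: the n-th element of R in increasing order (counting from 0).\<close>
definition rho :: "'a::{comm_ring_1,finite} \<Rightarrow> nat \<Rightarrow> nat \<Rightarrow> (nat \<Rightarrow> 'a) \<Rightarrow> nat \<Rightarrow> 'a" where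
  "rho g s q e n = (THE x. card {y. rless g s q e y x} = n)"

text \<open>Entry (row i, column j) of G_k, rows/columns 0-indexed; k = 0 is unused.\<close>
fun Gmat :: "'a::{comm_ring_1,finite} \<Rightarrow> nat \<Rightarrow> nat \<Rightarrow> (nat \<Rightarrow> 'a) \<Rightarrow> nat \<Rightarrow> nat \<Rightarrow> nat \<Rightarrow> 'a" where
  "Gmat g s q e 0 i j = 0"
| "Gmat g s q e (Suc 0) i j = rho g s q e j"
| "Gmat g s q e (Suc (Suc k)) i j =
     (if i = 0 then rho g s q e (j div (q ^ s) ^ Suc k)
      else Gmat g s q e (Suc k) (i - 1) (j mod (q ^ s) ^ Suc k))"

definition Grow :: "'a::{comm_ring_1,finite} \<Rightarrow> nat \<Rightarrow> nat \<Rightarrow> (nat \<Rightarrow> 'a) \<Rightarrow> nat \<Rightarrow> nat \<Rightarrow> 'a list" where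
  "Grow g s q e k i = map (Gmat g s q e k i) [0..<q ^ (s * k)]"

definition Scode :: "'a::{comm_ring_1,finite} \<Rightarrow> nat \<Rightarrow> nat \<Rightarrow> (nat \<Rightarrow> 'a) \<Rightarrow> nat \<Rightarrow> 'a list set" where
  "Scode g s q e k = {map (\<lambda>j. \<Sum>i<k. a i * Gmat g s q e k i j) [0..<q ^ (s * k)] | a. True}"

definition wHom :: "'a::comm_ring_1 \<Rightarrow> nat \<Rightarrow> nat \<Rightarrow> 'a \<Rightarrow> nat" where
  "wHom g s q x = (if x = 0 then 0
                   else if x \<notin> pideal (g ^ (s - 1)) then (q - 1) * q ^ (s - 2)
                   else q ^ (s - 1))"

definition wHom_vec :: "'a::comm_ring_1 \<Rightarrow> nat \<Rightarrow> nat \<Rightarrow> 'a list \<Rightarrow> nat" where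
  "wHom_vec g s q c = sum_list (map (wHom g s q) c)"

end

theory Submission
  imports Defs "HOL-Library.Function_Algebras"
begin

text \<open>Column j of G_k is the vector of base-q^s digits of j, each read through the
  enumeration \<rho>, so the columns of G_k run through R^k exactly once. A codeword is
  therefore the table of values of a linear form f : R^k \<rightarrow> R. The image of f is a
  nonzero ideal, i.e. \<langle>\<gamma>^t\<rangle> for some t < s, and every value is taken
  |ker f| times. The homogeneous weight has the same average (q-1)q^(s-2) on every
  nonzero ideal, so w_Hom(c) = |ker f| |\<langle>\<gamma>^t\<rangle>| (q-1)q^(s-2) = q^(sk) (q-1) q^(s-2).\<close>

lemma sum_comp_additive:
  fixes \<phi> :: "'b::ab_group_add \<Rightarrow> 'c::ab_group_add" and F :: "'c \<Rightarrow> 'd::comm_semiring_1"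
  assumes fin: "finite A" and diff_closed: "\<And>x y. x \<in> A \<Longrightarrow> y \<in> A \<Longrightarrow> x - y \<in> A"
    and additive: "\<And>x y. x \<in> A \<Longrightarrow> y \<in> A \<Longrightarrow> \<phi> (x - y) = \<phi> x - \<phi> y"
  shows "(\<Sum>x\<in>A. F (\<phi> x)) = of_nat (card {x\<in>A. \<phi> x = 0}) * sum F (\<phi> ` A)"
proof -
  have fibre_card: "card {x\<in>A. \<phi> x = \<phi> x0} = card {x\<in>A. \<phi> x = 0}" if x0: "x0 \<in> A" for x0
  proof (rule bij_betw_same_card[of "\<lambda>x. x - x0"], rule bij_betw_byWitness[where f'="\<lambda>x. x + x0"])
    have "0 \<in> A" and "\<phi> 0 = 0" using diff_closed[OF x0 x0] additive[OF x0 x0] by simp_all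
    then have "- x0 \<in> A" and "\<phi> (- x0) = - \<phi> x0"
      using diff_closed[OF _ x0] additive[OF _ x0] by fastforce+
    then show "(\<lambda>x. x + x0) ` {x \<in> A. \<phi> x = 0} \<subseteq> {x \<in> A. \<phi> x = \<phi> x0}"
      using diff_closed[of _ "- x0"] additive[of _ "- x0"] by auto
    show "(\<lambda>x. x - x0) ` {x \<in> A. \<phi> x = \<phi> x0} \<subseteq> {x \<in> A. \<phi> x = 0}"
      using diff_closed additive x0 by auto
  qed simp_all
  have "(\<Sum>x\<in>A. F (\<phi> x)) = (\<Sum>z\<in>\<phi> ` A. \<Sum>x | x \<in> A \<and> \<phi> x = z. F (\<phi> x))"
    by (rule sum.image_gen[OF fin])
  also have "\<dots> = (\<Sum>z\<in>\<phi> ` A. of_nat (card {x\<in>A. \<phi> x = 0}) * F z)"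
    by (rule sum.cong) (auto simp: fibre_card)
  finally show ?thesis by (simp add: sum_distrib_left)
qed

lemma card_eq_card_kernel_mult_card_image:
  fixes \<phi> :: "'b::ab_group_add \<Rightarrow> 'c::ab_group_add"
  assumes "finite A" and "\<And>x y. x \<in> A \<Longrightarrow> y \<in> A \<Longrightarrow> x - y \<in> A"
    and "\<And>x y. x \<in> A \<Longrightarrow> y \<in> A \<Longrightarrow> \<phi> (x - y) = \<phi> x - \<phi> y"
  shows "card A = card {x\<in>A. \<phi> x = 0} * card (\<phi> ` A)"
  using sum_comp_additive[of A \<phi> "\<lambda>_. 1 :: nat"] assms by simp

lemma mult_unit_eq_0_iff:
  fixes u y :: "'a::comm_semiring_1"
  assumes "u dvd 1"
  shows "y * u = 0 \<longleftrightarrow> y = 0"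
proof
  obtain v where "1 = u * v" using assms by (elim dvdE) simp
  then show "y * u = 0 \<Longrightarrow> y = 0" by (metis mult.assoc mult_1_right mult_zero_left)
qed simp

lemma pideal_iff: "x \<in> pideal y \<longleftrightarrow> (\<exists>z. x = y * z)"
  by (auto simp: pideal_def)

lemma pideal_mult_self [simp]: "y * z \<in> pideal y"
  by (auto simp: pideal_iff)

lemma zero_in_pideal [simp]: "0 \<in> pideal y"
  using pideal_mult_self[of y 0] by simp

lemma self_in_pideal [simp]: "y \<in> pideal y"
  using pideal_mult_self[of y 1] by simp

lemma pideal_add: "x \<in> pideal y \<Longrightarrow> x' \<in> pideal y \<Longrightarrow> x + x' \<in> pideal y"
  by (auto simp: pideal_iff) (metis distrib_left)

lemma pideal_diff: "x \<in> pideal y \<Longrightarrow> x' \<in> pideal y \<Longrightarrow> x - x' \<in> pideal y"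
  by (auto simp: pideal_iff) (metis right_diff_distrib)

lemma pideal_mult: "x \<in> pideal y \<Longrightarrow> r * x \<in> pideal y"
  by (auto simp: pideal_iff) (metis mult.left_commute)

lemma pideal_one [simp]: "pideal 1 = UNIV"
  by (auto simp: pideal_iff)

lemma pideal_power_antimono: "m \<le> n \<Longrightarrow> pideal (g ^ n) \<subseteq> pideal (g ^ m)"
  by (auto simp: pideal_iff) (metis le_add_diff_inverse mult.assoc power_add)

lemma is_ideal_pideal: "is_ideal (pideal y)"
  by (simp add: is_ideal_def pideal_add pideal_mult)

lemma sum_power_Suc_shift:
  fixes x :: "'a::comm_semiring_1"
  shows "(\<Sum>i<Suc n. f i * x ^ i) = f 0 + x * (\<Sum>i<n. f (Suc i) * x ^ i)"
  by (subst sum.lessThan_Suc_shift) (simp add: sum_distrib_left mult_ac)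

lemma wHom_0 [simp]: "wHom g s q 0 = 0"
  by (simp add: wHom_def)

lemma bij_betw_div_mod:
  fixes m n :: nat
  assumes "n > 0"
  shows "bij_betw (\<lambda>j. (j div n, j mod n)) {..<m * n} ({..<m} \<times> {..<n})"
proof (rule bij_betw_byWitness[where f' = "\<lambda>(a, b). a * n + b"])
  show "(\<lambda>j. (j div n, j mod n)) ` {..<m * n} \<subseteq> {..<m} \<times> {..<n}"
    using assms by (auto simp: less_mult_imp_div_less)
  show "(\<lambda>(a, b). a * n + b) ` ({..<m} \<times> {..<n}) \<subseteq> {..<m * n}"
  proof clarsimp
    fix a b assume "a < m" "b < n"
    then have "a * n + b < (a + 1) * n" by simp
    also have "\<dots> \<le> m * n" using \<open>a < m\<close> by (intro mult_right_mono) simp_all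
    finally show "a * n + b < m * n" .
  qed
qed (use assms in auto)

text \<open>R^k is modelled by the functions from nat to R that vanish from index k on.\<close>

definition vectors :: "nat \<Rightarrow> (nat \<Rightarrow> 'a::zero) set" where
  "vectors k = {v. \<forall>i\<ge>k. v i = 0}"

lemma vectors_0: "vectors 0 = {\<lambda>_. 0}"
  by (auto simp: vectors_def)

lemma bij_betw_case_nat_vectors:
  "bij_betw (\<lambda>(x, v). case_nat x v) (UNIV \<times> vectors k) (vectors (Suc k))"
  by (rule bij_betw_byWitness[where f' = "\<lambda>v. (v 0, v \<circ> Suc)"])
    (auto simp: vectors_def fun_eq_iff split: nat.split)

lemma card_vectors: "card (vectors k :: (nat \<Rightarrow> 'a::{zero,finite}) set) = card (UNIV :: 'a set) ^ k"
proof (induction k)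
  case (Suc k)
  then show ?case
    using bij_betw_same_card[OF bij_betw_case_nat_vectors[of k, where 'a = 'a]]
    by (simp add: card_cartesian_product)
qed (simp add: vectors_0)

lemma finite_vectors: "finite (vectors k :: (nat \<Rightarrow> 'a::{zero,finite}) set)"
  by (rule card_ge_0_finite) (simp add: card_vectors finite_UNIV_card_ge_0)

lemma is_ideal_linear_form_image:
  fixes a :: "nat \<Rightarrow> 'a::comm_ring_1"
  shows "is_ideal ((\<lambda>v. \<Sum>i<k. a i * v i) ` vectors k)" (is "is_ideal (?f ` _)")
  unfolding is_ideal_def
proof (intro conjI ballI allI)
  show "0 \<in> ?f ` vectors k"
    by (rule image_eqI[where x = 0]) (simp_all add: vectors_def)
next
  fix x y assume "x \<in> ?f ` vectors k" "y \<in> ?f ` vectors k"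
  then obtain v w where "v \<in> vectors k" "w \<in> vectors k" "x = ?f v" "y = ?f w" by blast
  then show "x + y \<in> ?f ` vectors k"
    by (intro image_eqI[where x = "v + w"]) (simp_all add: vectors_def distrib_left sum.distrib)
next
  fix r x assume "x \<in> ?f ` vectors k"
  then obtain v where "v \<in> vectors k" "x = ?f v" by blast
  then show "r * x \<in> ?f ` vectors k"
    by (intro image_eqI[where x = "\<lambda>i. r * v i"]) (simp_all add: vectors_def sum_distrib_left mult_ac)
qed

definition colex_less :: "nat \<Rightarrow> (nat \<Rightarrow> 'b::linorder) \<Rightarrow> (nat \<Rightarrow> 'b) \<Rightarrow> bool" where
  "colex_less n a b \<longleftrightarrow> (\<exists>i<n. a i < b i \<and> (\<forall>j. i < j \<and> j < n \<longrightarrow> a j = b j))"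

lemma colex_less_0 [simp]: "\<not> colex_less 0 a b"
  by (simp add: colex_less_def)

lemma colex_less_Suc:
  "colex_less (Suc n) a b \<longleftrightarrow> a n < b n \<or> (a n = b n \<and> colex_less n a b)"
proof
  assume "colex_less (Suc n) a b"
  then obtain i where "i < Suc n" "a i < b i" and above: "\<forall>j. i < j \<and> j < Suc n \<longrightarrow> a j = b j"
    by (auto simp: colex_less_def)
  show "a n < b n \<or> (a n = b n \<and> colex_less n a b)"
  proof (cases "i = n")
    case False
    with \<open>i < Suc n\<close> have "i < n" by simp
    with above \<open>a i < b i\<close> show ?thesis by (auto simp: colex_less_def)
  qed (use \<open>a i < b i\<close> in simp)
next
  assume "a n < b n \<or> (a n = b n \<and> colex_less n a b)"
  then show "colex_less (Suc n) a b"
    unfolding colex_less_def by (metis less_SucE less_SucI not_less_eq)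
qed

lemma colex_less_irrefl: "\<not> colex_less n a a"
  by (induction n) (simp_all add: colex_less_Suc)

lemma colex_less_trans: "colex_less n a b \<Longrightarrow> colex_less n b c \<Longrightarrow> colex_less n a c"
  by (induction n) (auto simp: colex_less_Suc)

lemma colex_less_total:
  "\<exists>i<n. a i \<noteq> b i \<Longrightarrow> colex_less n a b \<or> colex_less n b a"
  by (induction n) (auto simp: colex_less_Suc less_Suc_eq neq_iff)

lemma bij_betw_card_less:
  fixes less :: "'a::finite \<Rightarrow> 'a \<Rightarrow> bool"
  assumes irrefl: "\<And>x. \<not> less x x" and trans: "\<And>x y z. less x y \<Longrightarrow> less y z \<Longrightarrow> less x z"
    and total: "\<And>x y. x \<noteq> y \<Longrightarrow> less x y \<or> less y x"
  shows "bij_betw (\<lambda>x. card {y. less y x}) UNIV {..<card (UNIV :: 'a set)}"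
proof -
  let ?rank = "\<lambda>x. card {y. less y x}"
  have rank_mono: "?rank x < ?rank y" if "less x y" for x y
  proof -
    have "{z. less z x} \<subset> {z. less z y}" using that irrefl trans by blast
    then show ?thesis by (simp add: psubset_card_mono)
  qed
  have "inj ?rank"
  proof (rule injI, rule ccontr)
    fix x y assume "?rank x = ?rank y" "x \<noteq> y"
    then show False using total[of x y] rank_mono by fastforce
  qed
  moreover have "?rank x < card (UNIV :: 'a set)" for x
    using irrefl by (intro psubset_card_mono) auto
  ultimately have "range ?rank = {..<card (UNIV :: 'a set)}"
    by (intro card_subset_eq) (auto simp: card_image)
  with \<open>inj ?rank\<close> show ?thesis by (simp add: bij_betw_def)
qed

section \<open>Finite chain rings\<close>

locale finite_chain_ring =
  fixes g :: "'a::{comm_ring_1,finite}" and s q :: nat and e :: "nat \<Rightarrow> 'a"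
  assumes ring_setup: "chain_ring_setup g s q e"
begin

lemma s_ge_1: "s \<ge> 1" and power_s: "g ^ s = 0" and power_s_minus_1: "g ^ (s - 1) \<noteq> 0"
  and representatives: "\<And>x. \<exists>!i. i < q \<and> x - e i \<in> pideal g"
  using ring_setup by (auto simp: chain_ring_setup_def)

lemma nonunit_in_maximal_ideal:
  assumes "\<not> x dvd 1"
  shows "x \<in> pideal g"
proof -
  have "pideal x \<noteq> UNIV"
    using assms by (metis UNIV_I dvdI pideal_iff)
  moreover have "pideal x \<subseteq> pideal g \<or> pideal g \<subseteq> pideal x"
    using ring_setup is_ideal_pideal unfolding chain_ring_setup_def chain_ring_def by blast
  ultimately have "pideal x \<subseteq> pideal g"
    using ring_setup is_ideal_pideal by (auto simp: chain_ring_setup_def maximal_ideal_def)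
  then show ?thesis by auto
qed

lemma q_ge_2: "q \<ge> 2"
proof -
  have "pideal g \<noteq> UNIV"
    using ring_setup by (simp add: chain_ring_setup_def maximal_ideal_def)
  then obtain x where x: "x \<notin> pideal g" by auto
  obtain i where "i < q" "x - e i \<in> pideal g" using representatives by blast
  moreover obtain i0 where "i0 < q" "0 - e i0 \<in> pideal g" using representatives by blast
  ultimately have "i \<noteq> i0"
    using x pideal_diff[of "x - e i" g "0 - e i"] by auto
  with \<open>i < q\<close> \<open>i0 < q\<close> show ?thesis by linarith
qed

lemma representatives_inj:
  assumes "i < q" "i' < q" "e i - e i' \<in> pideal g"
  shows "i = i'"
  using representatives[of "e i"] assms by force

lemma power_eq_0_iff: "g ^ n = 0 \<longleftrightarrow> s \<le> n"
proof
  assume "g ^ n = 0"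
  show "s \<le> n"
  proof (rule ccontr)
    assume "\<not> s \<le> n"
    then have "g ^ (s - 1) = g ^ n * g ^ (s - 1 - n)" by (simp flip: power_add)
    with \<open>g ^ n = 0\<close> power_s_minus_1 show False by simp
  qed
next
  assume "s \<le> n"
  then have "g ^ n = g ^ s * g ^ (n - s)" by (simp flip: power_add)
  with power_s show "g ^ n = 0" by simp
qed

lemma power_mult_unit:
  assumes "x \<noteq> 0"
  obtains t u where "t < s" "u dvd 1" "x = g ^ t * u"
proof -
  have "(\<exists>t<n. \<exists>u. u dvd 1 \<and> x = g ^ t * u) \<or> x \<in> pideal (g ^ n)" for n
  proof (induction n)
    case (Suc n)
    then show ?case
    proof (elim disjE)
      assume "x \<in> pideal (g ^ n)"
      then obtain y where y: "x = g ^ n * y" by (auto simp: pideal_iff)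
      show ?case
      proof (cases "y dvd 1")
        case False
        then obtain z where "y = g * z" using nonunit_in_maximal_ideal pideal_iff by blast
        then have "x = g ^ Suc n * z" using y by (simp add: mult.assoc)
        then show ?thesis by (metis pideal_mult_self)
      qed (use y in blast)
    qed (use less_SucI in blast)
  qed simp
  from this[of s] show ?thesis
    using that assms power_s by (auto simp: pideal_iff)
qed

lemma annihilator_of_generator: "g * x = 0 \<Longrightarrow> x \<in> pideal (g ^ (s - 1))"
proof (cases "x = 0")
  case False
  assume gx: "g * x = 0"
  obtain t u where tu: "t < s" "u dvd 1" "x = g ^ t * u" using power_mult_unit[OF False] .
  then have "g ^ Suc t * u = 0" using gx by (simp add: mult.assoc)
  then have "s \<le> Suc t" using tu(2) by (simp only: mult_unit_eq_0_iff power_eq_0_iff)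
  then have "t = s - 1" using tu(1) by simp
  with tu show ?thesis by (metis pideal_mult_self)
qed simp

lemma socle_eq_image: "pideal (g ^ (s - 1)) = (\<lambda>i. g ^ (s - 1) * e i) ` {..<q}"
proof
  show "pideal (g ^ (s - 1)) \<subseteq> (\<lambda>i. g ^ (s - 1) * e i) ` {..<q}"
  proof
    fix x assume "x \<in> pideal (g ^ (s - 1))"
    then obtain y where y: "x = g ^ (s - 1) * y" by (auto simp: pideal_iff)
    obtain i where i: "i < q" "y - e i \<in> pideal g" using representatives by blast
    then obtain z where "y = e i + g * z" by (auto simp: pideal_iff algebra_simps)
    then have "x = g ^ (s - 1) * e i + g ^ (s - 1 + 1) * z"
      using y by (simp add: algebra_simps)
    also have "g ^ (s - 1 + 1) = 0" using s_ge_1 power_s by simp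
    finally show "x \<in> (\<lambda>i. g ^ (s - 1) * e i) ` {..<q}" using i by simp
  qed
qed auto

lemma card_socle: "card (pideal (g ^ (s - 1))) = q"
proof -
  have "inj_on (\<lambda>i. g ^ (s - 1) * e i) {..<q}"
  proof (rule inj_onI)
    fix i i' assume "i \<in> {..<q}" "i' \<in> {..<q}" and eq: "g ^ (s - 1) * e i = g ^ (s - 1) * e i'"
    have "(e i - e i') dvd 1 \<Longrightarrow> False"
      using eq power_s_minus_1 mult_unit_eq_0_iff[of "e i - e i'" "g ^ (s - 1)"]
      by (simp add: right_diff_distrib)
    then show "i = i'"
      using \<open>i \<in> {..<q}\<close> \<open>i' \<in> {..<q}\<close> nonunit_in_maximal_ideal representatives_inj by blast
  qed
  then show ?thesis unfolding socle_eq_image by (simp add: card_image)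
qed

lemma card_pideal_power: "t \<le> s \<Longrightarrow> card (pideal (g ^ t)) = q ^ (s - t)"
proof (induction t rule: inc_induct)
  case base
  have "pideal (g ^ s) = {0}" using power_s by (auto simp: pideal_iff)
  then show ?case by simp
next
  case (step n)
  let ?I = "pideal (g ^ n)"
  have "card ?I = card {x\<in>?I. g * x = 0} * card ((*) g ` ?I)"
    by (rule card_eq_card_kernel_mult_card_image) (auto simp: pideal_diff right_diff_distrib)
  moreover have "{x\<in>?I. g * x = 0} = pideal (g ^ (s - 1))"
  proof -
    have "g * (g ^ (s - 1) * z) = 0" for z
      using power_s s_ge_1 by (metis mult.assoc mult_zero_left power_eq_if not_one_le_zero)
    moreover have "pideal (g ^ (s - 1)) \<subseteq> ?I"
      using step.hyps by (intro pideal_power_antimono) simp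
    ultimately show ?thesis
      using annihilator_of_generator by (auto simp: pideal_iff)
  qed
  moreover have "(*) g ` ?I = pideal (g ^ Suc n)"
    by (auto simp: pideal_iff mult.assoc) (metis image_eqI pideal_mult_self)
  ultimately show ?case
    using step card_socle by (simp add: Suc_diff_Suc flip: power_Suc)
qed

lemma card_ring: "card (UNIV :: 'a set) = q ^ s"
  using card_pideal_power[of 0] by simp

lemma nonzero_ideal_eq_pideal_power:
  assumes I: "is_ideal I" and "I \<noteq> {0}"
  obtains t where "t < s" "I = pideal (g ^ t)"
proof -
  have power_in_I: "g ^ t \<in> I" if "g ^ t * u \<in> I" "u dvd 1" for t u
  proof -
    obtain v where "1 = u * v" using \<open>u dvd 1\<close> by (elim dvdE)
    then have "g ^ t = v * (g ^ t * u)" by (metis mult.left_commute mult.commute mult_1_right)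
    with I \<open>g ^ t * u \<in> I\<close> show ?thesis unfolding is_ideal_def by metis
  qed
  obtain x where "x \<in> I" "x \<noteq> 0" using \<open>I \<noteq> {0}\<close> I by (auto simp: is_ideal_def)
  then obtain t1 where "t1 < s" "g ^ t1 \<in> I" by (metis power_in_I power_mult_unit)
  define t where "t = (LEAST t. g ^ t \<in> I)"
  have "g ^ t \<in> I" unfolding t_def by (rule LeastI) fact
  have "t \<le> t1" unfolding t_def by (rule Least_le) fact
  have "I = pideal (g ^ t)"
  proof
    show "pideal (g ^ t) \<subseteq> I"
      using I \<open>g ^ t \<in> I\<close> by (auto simp: is_ideal_def pideal_iff mult.commute)
    show "I \<subseteq> pideal (g ^ t)"
    proof
      fix y assume "y \<in> I"
      show "y \<in> pideal (g ^ t)"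
      proof (cases "y = 0")
        case False
        then obtain t' u where "u dvd 1" "y = g ^ t' * u" using power_mult_unit by metis
        with \<open>y \<in> I\<close> have "t \<le> t'" unfolding t_def by (metis Least_le power_in_I)
        then show ?thesis
          using pideal_power_antimono[of t t' g] \<open>y = g ^ t' * u\<close> by auto
      qed simp
    qed
  qed
  moreover have "t < s" using \<open>t \<le> t1\<close> \<open>t1 < s\<close> by simp
  ultimately show ?thesis using that by blast
qed

text \<open>The homogeneous weight has average (q-1)q^(s-2) on every nonzero ideal. Multiplying
  by q keeps this in nat and also covers s = 1, where the weight is the Hamming weight.\<close>

lemma sum_wHom_pideal_power:
  assumes "t < s"
  shows "q * (\<Sum>z\<in>pideal (g ^ t). wHom g s q z) = (q - 1) * q ^ (s - 1) * card (pideal (g ^ t))"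
proof -
  let ?I = "pideal (g ^ t)" and ?P = "pideal (g ^ (s - 1))" and ?w = "wHom g s q"
  have "?P \<subseteq> ?I" using assms by (intro pideal_power_antimono) simp
  have outside_socle: "q * ?w z = (q - 1) * q ^ (s - 1)" if "z \<in> ?I - ?P" for z
  proof -
    have "z \<noteq> 0" "z \<notin> ?P" using that by auto
    moreover from \<open>z \<notin> ?P\<close> have "s \<noteq> 1" by auto
    then have "s - 1 = Suc (s - 2)" using s_ge_1 by simp
    then have "q ^ (s - 1) = q * q ^ (s - 2)" by simp
    ultimately show ?thesis by (simp add: wHom_def)
  qed
  have socle: "(\<Sum>z\<in>?P. ?w z) = (q - 1) * q ^ (s - 1)"
  proof -
    have "(\<Sum>z\<in>?P. ?w z) = (\<Sum>z\<in>?P - {0}. ?w z)"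
      by (subst sum.remove[of _ 0]) simp_all
    also have "\<dots> = (\<Sum>z\<in>?P - {0}. q ^ (s - 1))"
      by (rule sum.cong) (simp_all add: wHom_def)
    finally show ?thesis using card_socle by simp
  qed
  have "q * (\<Sum>z\<in>?I. ?w z) = (\<Sum>z\<in>?I - ?P. q * ?w z) + q * (\<Sum>z\<in>?P. ?w z)"
    by (simp add: sum.subset_diff[OF \<open>?P \<subseteq> ?I\<close>] sum_distrib_left distrib_left)
  also have "\<dots> = card (?I - ?P) * ((q - 1) * q ^ (s - 1)) + q * ((q - 1) * q ^ (s - 1))"
    using socle by (simp add: outside_socle)
  also have "card (?I - ?P) = card ?I - q"
    using \<open>?P \<subseteq> ?I\<close> card_socle by (simp add: card_Diff_subset)
  also have "(card ?I - q) * ((q - 1) * q ^ (s - 1)) + q * ((q - 1) * q ^ (s - 1))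
      = (card ?I - q + q) * ((q - 1) * q ^ (s - 1))"
    by (simp only: add_mult_distrib)
  also have "card ?I - q + q = card ?I"
    using card_mono[OF _ \<open>?P \<subseteq> ?I\<close>] card_socle by simp
  finally show ?thesis by (simp only: mult.commute)
qed

section \<open>Digit expansions and the enumeration of R\<close>

lemma digit_expansion_exists:
  "\<exists>d. (\<forall>i<n. d i < q) \<and> (\<forall>i\<ge>n. d i = 0) \<and> x - (\<Sum>i<n. e (d i) * g ^ i) \<in> pideal (g ^ n)"
proof (induction n arbitrary: x)
  case (Suc n)
  obtain i0 where i0: "i0 < q" "x - e i0 \<in> pideal g" using representatives by blast
  then obtain y where y: "x = e i0 + g * y" by (auto simp: pideal_iff algebra_simps)
  obtain d where d: "\<forall>i<n. d i < q" "\<forall>i\<ge>n. d i = 0"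
    and "y - (\<Sum>i<n. e (d i) * g ^ i) \<in> pideal (g ^ n)" using Suc.IH[of y] by blast
  then obtain z where z: "y - (\<Sum>i<n. e (d i) * g ^ i) = g ^ n * z" by (auto simp: pideal_iff)
  let ?d = "case_nat i0 d"
  have "x - (\<Sum>i<Suc n. e (?d i) * g ^ i) = g * (y - (\<Sum>i<n. e (d i) * g ^ i))"
    unfolding sum_power_Suc_shift using y by (simp add: algebra_simps)
  also have "\<dots> = g ^ Suc n * z" using z by (simp add: mult.assoc)
  finally have "x - (\<Sum>i<Suc n. e (?d i) * g ^ i) \<in> pideal (g ^ Suc n)" by simp
  moreover have "\<forall>i<Suc n. ?d i < q" "\<forall>i\<ge>Suc n. ?d i = 0"
    using i0 d by (auto simp: less_Suc_eq_0_disj Suc_le_eq split: nat.split)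
  ultimately show ?case by blast
qed (auto simp: pideal_iff)

lemma digit_expansion_unique:
  assumes "n \<le> s" "\<forall>i<n. d i < q \<and> d' i < q"
    and "(\<Sum>i<n. e (d i) * g ^ i) - (\<Sum>i<n. e (d' i) * g ^ i) \<in> pideal (g ^ n)"
  shows "\<forall>i<n. d i = d' i"
  using assms
proof (induction n arbitrary: d d')
  case (Suc n)
  let ?S = "\<Sum>i<n. e (d (Suc i)) * g ^ i" and ?S' = "\<Sum>i<n. e (d' (Suc i)) * g ^ i"
  obtain z where z: "(e (d 0) + g * ?S) - (e (d' 0) + g * ?S') = g ^ Suc n * z"
    using Suc.prems(3) unfolding sum_power_Suc_shift by (auto simp: pideal_iff)
  then have "e (d 0) - e (d' 0) = g * (g ^ n * z - (?S - ?S'))"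
    by (simp add: algebra_simps)
  then have "d 0 = d' 0"
    using representatives_inj Suc.prems(2) by (metis pideal_mult_self zero_less_Suc)
  with z have "g * (?S - ?S' - g ^ n * z) = 0" by (simp add: algebra_simps)
  then have "?S - ?S' - g ^ n * z \<in> pideal (g ^ (s - 1))" by (rule annihilator_of_generator)
  moreover have "pideal (g ^ (s - 1)) \<subseteq> pideal (g ^ n)"
    using Suc.prems(1) by (intro pideal_power_antimono) simp
  ultimately have "?S - ?S' - g ^ n * z \<in> pideal (g ^ n)" by blast
  then have "?S - ?S' \<in> pideal (g ^ n)"
    using pideal_add[OF _ pideal_mult_self[of "g ^ n" z]] by fastforce
  with Suc.IH[of "\<lambda>i. d (Suc i)" "\<lambda>i. d' (Suc i)"] Suc.prems(1,2)
  have "\<forall>i<n. d (Suc i) = d' (Suc i)" by simp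
  with \<open>d 0 = d' 0\<close> show ?case by (auto simp: less_Suc_eq_0_disj)
qed simp

lemma digits_expansion:
  "(\<forall>i<s. digits g s q e x i < q) \<and> (\<forall>i\<ge>s. digits g s q e x i = 0) \<and>
   x = (\<Sum>i<s. e (digits g s q e x i) * g ^ i)"
proof -
  let ?P = "\<lambda>d. (\<forall>i<s. d i < q) \<and> (\<forall>i\<ge>s. d i = 0) \<and> x = (\<Sum>i<s. e (d i) * g ^ i)"
  have "pideal (g ^ s) = {0}" using power_s by (auto simp: pideal_iff)
  then obtain d where "?P d" using digit_expansion_exists[of s x] by auto
  moreover have "d' = d" if "?P d'" for d'
  proof
    fix i show "d' i = d i"
      using digit_expansion_unique[of s d' d] \<open>?P d\<close> that by (cases "i < s") auto
  qed
  ultimately have "\<exists>!d. ?P d" by blast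
  then show ?thesis unfolding digits_def by (rule theI')
qed

lemma digits_differ:
  assumes "x \<noteq> y"
  shows "\<exists>i<s. digits g s q e x i \<noteq> digits g s q e y i"
  using digits_expansion[of x] digits_expansion[of y] assms
  by (metis (no_types, lifting) lessThan_iff sum.cong)

lemma bij_betw_rho: "bij_betw (rho g s q e) {..<q ^ s} UNIV"
proof -
  let ?rank = "\<lambda>x. card {y. rless g s q e y x}"
  have rless_iff: "rless g s q e x y \<longleftrightarrow> colex_less s (digits g s q e x) (digits g s q e y)" for x y
    by (simp add: rless_def colex_less_def)
  have "bij_betw ?rank UNIV {..<q ^ s}"
    unfolding card_ring[symmetric]
  proof (rule bij_betw_card_less)
    show "\<not> rless g s q e x x" for x
      by (simp add: rless_iff colex_less_irrefl)
    show "rless g s q e x z" if "rless g s q e x y" "rless g s q e y z" for x y z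
      using that colex_less_trans by (simp add: rless_iff) blast
    show "rless g s q e x y \<or> rless g s q e y x" if "x \<noteq> y" for x y
      using colex_less_total digits_differ[OF that] by (simp add: rless_iff)
  qed
  moreover have "rho g s q e = the_inv_into UNIV ?rank"
    by (simp add: fun_eq_iff rho_def the_inv_into_def)
  ultimately show ?thesis by (simp add: bij_betw_the_inv_into)
qed

section \<open>Codewords as value tables of linear forms\<close>

definition column :: "nat \<Rightarrow> nat \<Rightarrow> nat \<Rightarrow> 'a" where
  "column k j i = (if i < k then Gmat g s q e k i j else 0)"

lemma column_Suc:
  "column (Suc k) j = case_nat (rho g s q e (j div (q ^ s) ^ k)) (column k (j mod (q ^ s) ^ k))"
  by (cases k) (auto simp: column_def fun_eq_iff split: nat.split)

lemma bij_betw_column: "bij_betw (column k) {..<(q ^ s) ^ k} (vectors k)"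
proof (induction k)
  case 0
  show ?case by (simp add: column_def vectors_0 bij_betw_def lessThan_Suc fun_eq_iff)
next
  case (Suc k)
  let ?Q = "q ^ s"
  have "bij_betw (\<lambda>j. (j div ?Q ^ k, j mod ?Q ^ k)) {..<?Q ^ Suc k} ({..<?Q} \<times> {..<?Q ^ k})"
    using bij_betw_div_mod[of "?Q ^ k" ?Q] q_ge_2 by (simp add: mult.commute)
  moreover have "bij_betw (map_prod (rho g s q e) (column k)) ({..<?Q} \<times> {..<?Q ^ k}) (UNIV \<times> vectors k)"
    using bij_betw_rho Suc.IH by (rule bij_betw_map_prod)
  ultimately have "bij_betw ((\<lambda>(x, v). case_nat x v) \<circ> map_prod (rho g s q e) (column k)
      \<circ> (\<lambda>j. (j div ?Q ^ k, j mod ?Q ^ k))) {..<?Q ^ Suc k} (vectors (Suc k))"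
    using bij_betw_case_nat_vectors by (blast intro: bij_betw_trans)
  then show ?case
    by (rule bij_betw_cong[THEN iffD1, rotated]) (simp add: column_Suc)
qed

lemma sum_wHom_linear_form:
  assumes nonzero: "\<exists>v\<in>vectors k. (\<Sum>i<k. a i * v i) \<noteq> 0"
  shows "q * (\<Sum>v\<in>vectors k. wHom g s q (\<Sum>i<k. a i * v i)) = (q - 1) * q ^ (s - 1) * q ^ (s * k)"
proof -
  define f where "f v = (\<Sum>i<k. a i * v i)" for v :: "nat \<Rightarrow> 'a"
  let ?K = "{v \<in> vectors k. f v = 0}"
  have diff_closed: "v - w \<in> vectors k" if "v \<in> vectors k" "w \<in> vectors k" for v w :: "nat \<Rightarrow> 'a"
    using that by (simp add: vectors_def)
  have additive: "f (v - w) = f v - f w" for v w :: "nat \<Rightarrow> 'a"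
    by (simp add: f_def right_diff_distrib sum_subtractf)
  have "is_ideal (f ` vectors k)" "f ` vectors k \<noteq> {0}"
    using is_ideal_linear_form_image nonzero by (auto simp: f_def fun_eq_iff)
  then obtain t where "t < s" and image: "f ` vectors k = pideal (g ^ t)"
    by (rule nonzero_ideal_eq_pideal_power)
  have "q * (\<Sum>v\<in>vectors k. wHom g s q (f v)) = card ?K * (q * (\<Sum>z\<in>pideal (g ^ t). wHom g s q z))"
    using sum_comp_additive[of "vectors k" f "wHom g s q", OF finite_vectors diff_closed additive] image
    by simp
  also have "\<dots> = (q - 1) * q ^ (s - 1) * (card ?K * card (f ` vectors k))"
    by (simp add: sum_wHom_pideal_power[OF \<open>t < s\<close>] image)
  also have "card ?K * card (f ` vectors k) = card (vectors k :: (nat \<Rightarrow> 'a) set)"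
    using card_eq_card_kernel_mult_card_image[of "vectors k" f, OF finite_vectors diff_closed additive]
    by simp
  also have "\<dots> = q ^ (s * k)"
    by (simp add: card_vectors card_ring power_mult)
  finally show ?thesis by (simp add: f_def)
qed

lemma sum_wHom_codeword:
  assumes "c \<in> Scode g s q e k" and "c \<noteq> replicate (q ^ (s * k)) 0"
  shows "q * wHom_vec g s q c = (q - 1) * q ^ (s - 1) * q ^ (s * k)"
proof -
  obtain a where "c = map (\<lambda>j. \<Sum>i<k. a i * Gmat g s q e k i j) [0..<q ^ (s * k)]"
    using assms(1) unfolding Scode_def by blast
  then have c: "c = map (\<lambda>j. \<Sum>i<k. a i * column k j i) [0..<(q ^ s) ^ k]"
    by (simp add: column_def power_mult)
  have "wHom_vec g s q c = (\<Sum>j<(q ^ s) ^ k. wHom g s q (\<Sum>i<k. a i * column k j i))"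
    by (simp add: wHom_vec_def c interv_sum_list_conv_sum_set_nat atLeast0LessThan)
  also have "\<dots> = (\<Sum>v\<in>vectors k. wHom g s q (\<Sum>i<k. a i * v i))"
    by (rule sum.reindex_bij_betw[OF bij_betw_column])
  finally have weight: "wHom_vec g s q c = (\<Sum>v\<in>vectors k. wHom g s q (\<Sum>i<k. a i * v i))" .
  have "\<exists>v\<in>vectors k. (\<Sum>i<k. a i * v i) \<noteq> 0"
  proof (rule ccontr)
    assume "\<not> ?thesis"
    then have "c = replicate (q ^ (s * k)) 0"
      using bij_betw_column[of k] unfolding c bij_betw_def
      by (auto simp: list_eq_iff_nth_eq power_mult)
    with assms(2) show False ..
  qed
  then show ?thesis
    using sum_wHom_linear_form weight by simp
qed

end

theorem proposition3p14:
  fixes g :: "'a::{comm_ring_1,finite}" and s q k :: nat and e :: "nat \<Rightarrow> 'a" and c :: "'a list"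
  assumes "chain_ring_setup g s q e"
    and "k \<ge> 1"
    and "c \<in> Scode g s q e k"
    and "c \<noteq> replicate (q ^ (s * k)) 0"
  shows "wHom_vec g s q c = q ^ (s * (k + 1) - 2) * (q - 1)"
proof -
  interpret finite_chain_ring g s q e by (rule finite_chain_ring.intro) (rule assms(1))
  have "q * wHom_vec g s q c = (q - 1) * q ^ (s - 1 + s * k)"
    using sum_wHom_codeword[OF assms(3,4)] by (simp add: power_add)
  also have "s - 1 + s * k = Suc (s * (k + 1) - 2)"
    using s_ge_1 \<open>k \<ge> 1\<close> by (cases s) (simp_all add: algebra_simps)
  also have "(q - 1) * q ^ Suc (s * (k + 1) - 2) = q * (q ^ (s * (k + 1) - 2) * (q - 1))"
    by (simp only: power_Suc mult_ac)
  finally show ?thesis using q_ge_2 by simp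
qed

end
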